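(* Let $n \ge 1$ and $r \ge 1$ be integers, $p \in (0,1)$, and let $X_1,\dots,X_r$ be i.i.d. with $X_i = \frac{1}{n}Y_i$, $Y_i \sim \mathrm{Bin}(n,p)$. Let $Z = \min_{1\le i\le r} X_i$. Fix $\delta \in (0,1)$ and define \[ \Delta(\delta,p,n) = \log_2\frac{2}{\delta} + 4\log_2(n+1) + \Big[\log_2\frac{p}{1-p}\Big]_+ . \] Assume $\Delta(\delta,p,n) < \log_2 r$. Then: (i) if $\mathsf{KL}(0\Vert p) \ge \frac{\log_2 r - \Delta(\delta,p,n)}{n}$, then with probability at least $1-\delta$, \[ Z < p \quad\text{and}\quad \frac{\log_2 r - \Delta(\delta,p,n)}{n} \le \mathsf{KL}(Z\Vert p) \le \frac{\log_2 r + \Delta(\delta,p,n)}{n}; \] (ii) if $\mathsf{KL}(0\Vert p) < \frac{\log_2 r - \Delta(\delta,p,n)}{n}$, then $\mathbb{P}(Z = 0) \ge 1-\delta$.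
   Context: All logarithms are base $2$ unless written $\ln$. For $\alpha \in [0,1]$ and $\beta \in (0,1)$, $\mathsf{KL}(\alpha\Vert\beta) = \alpha\log_2\frac{\alpha}{\beta} + (1-\alpha)\log_2\frac{1-\alpha}{1-\beta}$ denotes the KL divergence (in bits) between $\mathrm{Bernoulli}(\alpha)$ and $\mathrm{Bernoulli}(\beta)$, with the convention $0\log 0 = 0$ (so $\mathsf{KL}(0\Vert p) = \log_2\frac{1}{1-p}$). For real $x$, $[x]_+ = \max(x,0)$. *)

theory Defs
  imports "HOL-Probability.Probability"
begin

definition KL :: "real \<Rightarrow> real \<Rightarrow> real" where
  "KL a b = (if a = 0 then 0 else a * log 2 (a / b))
          + (if a = 1 then 0 else (1 - a) * log 2 ((1 - a) / (1 - b)))"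

definition Delta :: "real \<Rightarrow> real \<Rightarrow> nat \<Rightarrow> real" where
  "Delta \<delta> p n = log 2 (2 / \<delta>) + 4 * log 2 (real n + 1) + max (log 2 (p / (1 - p))) 0"

definition Ys :: "nat \<Rightarrow> real \<Rightarrow> nat \<Rightarrow> (nat \<Rightarrow> nat) pmf" where
  "Ys n p r = Pi_pmf {1..r} 0 (\<lambda>_. binomial_pmf n p)"

definition Zmin :: "nat \<Rightarrow> nat \<Rightarrow> (nat \<Rightarrow> nat) \<Rightarrow> real" where
  "Zmin n r Y = Min ((\<lambda>i. real (Y i) / real n) ` {1..r})"

end

theory Submission
  imports Defs
begin

text \<open>
  Method of types: for \<open>k \<le> n\<close> the binomial probability \<open>P(Y = k)\<close> equals
  \<open>2 powr (-n KL(k/n, p))\<close> times the probability of \<open>k\<close> under \<open>Bin(n, k/n)\<close>, and the latter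
  lies in \<open>[1/(n+1), 1]\<close> because \<open>k\<close> is a mode of \<open>Bin(n, k/n)\<close>.
  Hence each value with \<open>KL(k/n, p) > U\<close> has probability below \<open>2 powr (-nU)\<close>, and a union
  bound over the \<open>r\<close> samples and \<open>n+1\<close> values shows that no sample overshoots, except with
  probability \<open>\<delta>/2\<close>.
  Let \<open>k\<close> end the initial run of values \<open>j < np\<close> with \<open>KL(j/n, p) \<ge> L\<close>. Either \<open>k+1\<close> has
  divergence below \<open>L\<close>, or \<open>k\<close> or \<open>k+1\<close> is a mode of \<open>Bin(n, p)\<close>; both ways \<open>P(Y = k)\<close> is
  at least of order \<open>2 powr (-nL)/(n+1)\<close>, so some sample is at most \<open>k\<close> except with
  probability \<open>exp(-r P(Y = k)) \<le> \<delta>/2\<close>. In case (ii) the same estimate at \<open>k = 0\<close> shows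
  that some sample vanishes.
\<close>

lemma pmf_binomial_Suc_ratio:
  assumes "0 \<le> q" "q \<le> 1" "j < n"
  shows "(real j + 1) * (1 - q) * pmf (binomial_pmf n q) (Suc j)
           = real (n - j) * q * pmf (binomial_pmf n q) j"
proof -
  have choose: "real (Suc j) * real (n choose Suc j) = real (n - j) * real (n choose j)"
    by (metis binomial_absorb_comp binomial_absorption of_nat_mult)
  have pow: "(1 - q) ^ (n - j) = (1 - q) * (1 - q) ^ (n - Suc j)"
    using assms(3) by (metis Suc_diff_Suc power_Suc)
  have "(real j + 1) * (1 - q) * pmf (binomial_pmf n q) (Suc j)
          = (real (Suc j) * real (n choose Suc j)) * (q * q ^ j) * ((1 - q) * (1 - q) ^ (n - Suc j))"
    using assms(1,2) by (simp add: algebra_simps)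
  also have "\<dots> = real (n - j) * q * pmf (binomial_pmf n q) j"
    unfolding choose using assms(1,2) by (simp add: pow algebra_simps)
  finally show ?thesis .
qed

lemma pmf_binomial_mono_below_mode:
  assumes "0 \<le> q" "q \<le> 1" "j < n" "real j + 1 \<le> (real n + 1) * q"
  shows "pmf (binomial_pmf n q) j \<le> pmf (binomial_pmf n q) (Suc j)"
proof -
  have le: "(real j + 1) * (1 - q) \<le> real (n - j) * q"
    using assms(3,4) by (simp add: of_nat_diff algebra_simps)
  have "0 < (real n + 1) * q"
    using assms(4) of_nat_0_le_iff[of j] by linarith
  then have pos: "0 < real (n - j) * q"
    using assms(3) by (simp add: zero_less_mult_iff)
  have "real (n - j) * q * pmf (binomial_pmf n q) j
          \<le> real (n - j) * q * pmf (binomial_pmf n q) (Suc j)"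
    unfolding pmf_binomial_Suc_ratio[OF assms(1-3), symmetric]
    using le by (rule mult_right_mono) simp
  then show ?thesis using pos by (rule mult_left_le_imp_le)
qed

lemma pmf_binomial_antimono_above_mode:
  assumes "0 \<le> q" "q \<le> 1" "j < n" "(real n + 1) * q \<le> real j + 1"
  shows "pmf (binomial_pmf n q) (Suc j) \<le> pmf (binomial_pmf n q) j"
proof -
  have le: "real (n - j) * q \<le> (real j + 1) * (1 - q)"
    using assms(3,4) by (simp add: of_nat_diff algebra_simps)
  have "q \<noteq> 1"
    using le assms(3) by auto
  then have pos: "0 < (real j + 1) * (1 - q)"
    using assms(2) by simp
  have "(real j + 1) * (1 - q) * pmf (binomial_pmf n q) (Suc j)
          \<le> (real j + 1) * (1 - q) * pmf (binomial_pmf n q) j"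
    unfolding pmf_binomial_Suc_ratio[OF assms(1-3)]
    using le by (rule mult_right_mono) simp
  then show ?thesis using pos by (rule mult_left_le_imp_le)
qed

lemma pmf_binomial_mode_ge:
  assumes "0 \<le> q" "q \<le> 1" "m \<le> n"
    and "real m \<le> (real n + 1) * q" "(real n + 1) * q \<le> real m + 1"
  shows "1 / (real n + 1) \<le> pmf (binomial_pmf n q) m"
proof -
  have max: "pmf (binomial_pmf n q) j \<le> pmf (binomial_pmf n q) m" if "j \<le> n" for j
  proof (cases "j \<le> m")
    case True
    then show ?thesis
    proof (induction rule: inc_induct)
      case (step i)
      with assms show ?case
        using pmf_binomial_mono_below_mode[of q i n] by fastforce
    qed simp
  next
    case False
    then have "m \<le> j" by simp
    then show ?thesis using \<open>j \<le> n\<close>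
    proof (induction rule: dec_induct)
      case (step i)
      with assms show ?case
        using pmf_binomial_antimono_above_mode[of q i n] by fastforce
    qed simp
  qed
  have "1 = (\<Sum>j\<le>n. pmf (binomial_pmf n q) j)"
    using binomial_ring[of q "1 - q" n] assms(1,2) by simp
  also have "\<dots> \<le> (\<Sum>j\<le>n. pmf (binomial_pmf n q) m)"
    by (rule sum_mono) (simp add: max)
  finally show ?thesis by (simp add: field_simps)
qed

lemma pmf_binomial_Suc_le:
  assumes "0 \<le> q" "q \<le> 1" "j < n"
  shows "(1 - q) * pmf (binomial_pmf n q) (Suc j) \<le> real n * q * pmf (binomial_pmf n q) j"
proof -
  have "(1 - q) * pmf (binomial_pmf n q) (Suc j)
          \<le> (real j + 1) * (1 - q) * pmf (binomial_pmf n q) (Suc j)"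
    using assms(2) mult_right_mono[of 1 "real j + 1" "1 - q"]
    by (intro mult_right_mono) auto
  also have "\<dots> = real (n - j) * q * pmf (binomial_pmf n q) j"
    by (rule pmf_binomial_Suc_ratio[OF assms])
  also have "\<dots> \<le> real n * q * pmf (binomial_pmf n q) j"
    using assms(1) by (intro mult_right_mono) auto
  finally show ?thesis .
qed

lemma KL_binomial_type:
  assumes "0 < n" "k \<le> n"
  shows "real n * KL (real k / real n) p
           = real k * log 2 ((real k / real n) / p)
             + real (n - k) * log 2 ((1 - real k / real n) / (1 - p))"
  using assms by (auto simp: KL_def algebra_simps of_nat_diff)

lemma powr_neg_log_ratio_pow:
  assumes "0 < p" "0 < a \<or> k = 0"
  shows "2 powr (- (real k * log 2 (a / p))) * a ^ k = p ^ k"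
proof (cases "k = 0")
  case False
  with assms have "0 < a" by simp
  have "2 powr (- (real k * log 2 (a / p))) = (2 powr log 2 (p / a)) powr real k"
    using \<open>0 < a\<close> assms(1) by (simp add: powr_powr log_divide algebra_simps)
  also have "\<dots> = (p / a) ^ k"
    using \<open>0 < a\<close> assms(1) by (simp add: powr_realpow)
  finally show ?thesis
    using \<open>0 < a\<close> by (simp add: power_divide)
qed simp

lemma pmf_binomial_eq_KL:
  assumes "0 < n" "k \<le> n" "0 < p" "p < 1"
  shows "pmf (binomial_pmf n p) k
           = 2 powr (- real n * KL (real k / real n) p) * pmf (binomial_pmf n (real k / real n)) k"
proof -
  define a where "a = real k / real n"
  have a: "0 \<le> a" "a \<le> 1" "0 < a \<or> k = 0" "0 < 1 - a \<or> n - k = 0"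
    using assms by (auto simp: a_def)
  have "- real n * KL a p = - (real k * log 2 (a / p)) + - (real (n - k) * log 2 ((1 - a) / (1 - p)))"
    using KL_binomial_type[OF assms(1,2), of p] unfolding a_def by simp
  then have "2 powr (- real n * KL a p)
      = 2 powr (- (real k * log 2 (a / p))) * 2 powr (- (real (n - k) * log 2 ((1 - a) / (1 - p))))"
    by (simp only: powr_add)
  then have "2 powr (- real n * KL a p) * pmf (binomial_pmf n a) k
          = real (n choose k)
            * (2 powr (- (real k * log 2 (a / p))) * a ^ k)
            * (2 powr (- (real (n - k) * log 2 ((1 - a) / (1 - p)))) * (1 - a) ^ (n - k))"
    using a by (simp add: ac_simps)
  also have "\<dots> = pmf (binomial_pmf n p) k"
    using a assms(3,4) by (simp add: powr_neg_log_ratio_pow)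
  finally show ?thesis
    unfolding a_def ..
qed

lemma pmf_binomial_le_KL:
  assumes "0 < n" "k \<le> n" "0 < p" "p < 1"
  shows "pmf (binomial_pmf n p) k \<le> 2 powr (- real n * KL (real k / real n) p)"
  unfolding pmf_binomial_eq_KL[OF assms]
  by (rule mult_left_le) (auto intro: pmf_le_1)

lemma pmf_binomial_ge_KL:
  assumes "0 < n" "k \<le> n" "0 < p" "p < 1"
  shows "2 powr (- real n * KL (real k / real n) p) / (real n + 1) \<le> pmf (binomial_pmf n p) k"
proof -
  have "1 / (real n + 1) \<le> pmf (binomial_pmf n (real k / real n)) k"
    using assms(1,2) by (intro pmf_binomial_mode_ge) (auto simp: field_simps)
  then show ?thesis
    unfolding pmf_binomial_eq_KL[OF assms]
    by (metis mult_left_mono powr_ge_zero times_divide_eq_right mult_1_right)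
qed

lemma prob_binomial_KL_gt:
  assumes "0 < n" "0 < p" "p < 1"
  shows "measure_pmf.prob (binomial_pmf n p) {k. U < KL (real k / real n) p}
           \<le> (real n + 1) * 2 powr (- real n * U)"
proof -
  let ?A = "{k. k \<le> n \<and> U < KL (real k / real n) p}"
  have "measure_pmf.prob (binomial_pmf n p) {k. U < KL (real k / real n) p}
          = measure_pmf.prob (binomial_pmf n p) ?A"
    using assms(2,3) by (intro measure_eq_AE) (auto simp: AE_measure_pmf_iff)
  also have "\<dots> = (\<Sum>k\<in>?A. pmf (binomial_pmf n p) k)"
    by (simp add: measure_measure_pmf_finite)
  also have "\<dots> \<le> (\<Sum>k\<in>?A. 2 powr (- real n * U))"
  proof (rule sum_mono)
    fix k assume k: "k \<in> ?A"
    then have "pmf (binomial_pmf n p) k \<le> 2 powr (- real n * KL (real k / real n) p)"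
      using assms by (intro pmf_binomial_le_KL) auto
    also have "\<dots> \<le> 2 powr (- real n * U)"
      using k assms(1) by simp
    finally show "pmf (binomial_pmf n p) k \<le> 2 powr (- real n * U)" .
  qed
  also have "\<dots> \<le> (real n + 1) * 2 powr (- real n * U)"
  proof -
    have "card ?A \<le> card {..n}"
      by (intro card_mono) auto
    then show ?thesis
      by (simp add: mult_right_mono)
  qed
  finally show ?thesis .
qed

lemma pmf_binomial_ge_at_KL_crossing:
  assumes "0 < n" "0 < p" "p < 1" "0 \<le> L"
    and "real k < real n * p"
    and "real (Suc k) < real n * p \<Longrightarrow> KL (real (Suc k) / real n) p < L"
  shows "min 1 ((1 - p) / (real n * p)) * (2 powr (- real n * L) / (real n + 1))
           \<le> pmf (binomial_pmf n p) k"
proof -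
  let ?f = "pmf (binomial_pmf n p)" and ?c = "(1 - p) / (real n * p)"
  define g where "g = 2 powr (- real n * L) / (real n + 1)"
  have "real n * p < real n"
    using assms(1,3) by simp
  then have "k < n"
    using assms(5) by linarith
  have "2 powr (- real n * L) \<le> 2 powr 0"
    using assms(4) by (intro powr_mono) auto
  then have g_le: "g \<le> 1 / (real n + 1)"
    by (simp add: g_def divide_right_mono)
  have "g \<le> ?f k \<or> g \<le> ?f (Suc k)"
  proof (cases "real (Suc k) < real n * p")
    case True
    then have "2 powr (- real n * L) \<le> 2 powr (- real n * KL (real (Suc k) / real n) p)"
      using assms(1,6) by simp
    then have "g \<le> 2 powr (- real n * KL (real (Suc k) / real n) p) / (real n + 1)"
      unfolding g_def by (simp add: divide_right_mono)
    also have "\<dots> \<le> ?f (Suc k)"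
      using True assms(1-3) \<open>k < n\<close> by (intro pmf_binomial_ge_KL) auto
    finally show ?thesis ..
  next
    case False
    show ?thesis
    proof (cases "(real n + 1) * p \<le> real k + 1")
      case True
      then have "1 / (real n + 1) \<le> ?f k"
        using assms(2,3,5) \<open>k < n\<close> by (intro pmf_binomial_mode_ge) (auto simp: algebra_simps)
      then show ?thesis
        using g_le by simp
    next
      case False
      then have "1 / (real n + 1) \<le> ?f (Suc k)"
        using \<open>\<not> real (Suc k) < real n * p\<close> assms(2,3) \<open>k < n\<close>
        by (intro pmf_binomial_mode_ge) (auto simp: algebra_simps)
      then show ?thesis
        using g_le by simp
    qed
  qed
  moreover have "?c * ?f (Suc k) \<le> ?f k"
    using pmf_binomial_Suc_le[of p k n] \<open>k < n\<close> assms(1-3) by (simp add: field_simps)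
  moreover have "0 \<le> g" "0 \<le> ?c"
    using assms(2,3) by (simp_all add: g_def)
  ultimately show ?thesis
    unfolding g_def[symmetric]
    by (smt (verit) min.cobounded1 min.cobounded2 mult_left_mono mult_right_mono mult_left_le_one_le)
qed

lemma prob_Pi_pmf_all_in:
  assumes "finite I"
  shows "measure_pmf.prob (Pi_pmf I d (\<lambda>_. D)) {Y. \<forall>i\<in>I. Y i \<in> A}
           = measure_pmf.prob D A ^ card I"
proof -
  have "{Y. \<forall>i\<in>I. Y i \<in> A} = Pi I (\<lambda>_. A)"
    by (auto simp: Pi_def)
  then show ?thesis
    using assms by (simp add: measure_Pi_pmf_Pi)
qed

lemma prob_Pi_pmf_all_avoid_le:
  assumes "finite I"
  shows "measure_pmf.prob (Pi_pmf I d (\<lambda>_. D)) {Y. \<forall>i\<in>I. Y i \<noteq> x}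
           \<le> exp (- (real (card I) * pmf D x))"
proof -
  have "measure_pmf.prob D (- {x}) = 1 - pmf D x"
    using measure_pmf.prob_compl[of "{x}" D] by (simp add: measure_pmf_single Compl_eq_Diff_UNIV)
  then have "measure_pmf.prob (Pi_pmf I d (\<lambda>_. D)) {Y. \<forall>i\<in>I. Y i \<noteq> x}
          = (1 - pmf D x) ^ card I"
    using prob_Pi_pmf_all_in[OF assms, of d D "- {x}"] by simp
  also have "\<dots> \<le> exp (- pmf D x) ^ card I"
    by (intro power_mono) (auto simp: pmf_le_1 exp_ge_add_one_self[of "- pmf D x", simplified])
  also have "\<dots> = exp (- (real (card I) * pmf D x))"
    by (simp flip: exp_of_nat_mult)
  finally show ?thesis .
qed

lemma prob_Pi_pmf_ex_in_le:
  assumes "finite I"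
  shows "measure_pmf.prob (Pi_pmf I d (\<lambda>_. D)) {Y. \<exists>i\<in>I. Y i \<in> A}
           \<le> real (card I) * measure_pmf.prob D A"
proof -
  have "{Y. \<exists>i\<in>I. Y i \<in> A} = (\<Union>i\<in>I. {Y. Y i \<in> A})"
    by auto
  then have "measure_pmf.prob (Pi_pmf I d (\<lambda>_. D)) {Y. \<exists>i\<in>I. Y i \<in> A}
          \<le> (\<Sum>i\<in>I. measure_pmf.prob (Pi_pmf I d (\<lambda>_. D)) {Y. Y i \<in> A})"
    using assms by (auto intro: measure_pmf.finite_measure_subadditive_finite)
  also have "\<dots> = (\<Sum>i\<in>I. measure_pmf.prob (map_pmf (\<lambda>Y. Y i) (Pi_pmf I d (\<lambda>_. D))) A)"
    by (simp add: vimage_def)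
  also have "\<dots> = real (card I) * measure_pmf.prob D A"
    using assms by (simp add: Pi_pmf_component)
  finally show ?thesis .
qed

lemma exp_neg_le:
  fixes c x :: real
  assumes "0 < c" "1 / c \<le> x"
  shows "exp (- x) \<le> c"
proof -
  have "0 < x"
    using assms by (smt (verit) divide_pos_pos)
  have "x \<le> exp x"
    using exp_ge_add_one_self[of x] by linarith
  then have "exp (- x) \<le> 1 / x"
    using \<open>0 < x\<close> by (simp add: exp_minus divide_simps)
  also have "\<dots> \<le> c"
    using assms \<open>0 < x\<close> by (simp add: field_simps)
  finally show ?thesis .
qed

lemma prob_ge_one_minus_union:
  assumes "- E \<subseteq> A \<union> B"
  shows "1 - measure_pmf.prob M A - measure_pmf.prob M B \<le> measure_pmf.prob M E"
proof -
  have "1 - measure_pmf.prob M E = measure_pmf.prob M (- E)"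
    using measure_pmf.prob_compl[of E M] by (simp add: Compl_eq_Diff_UNIV)
  also have "\<dots> \<le> measure_pmf.prob M (A \<union> B)"
    using assms by (intro measure_pmf.finite_measure_mono) auto
  also have "\<dots> \<le> measure_pmf.prob M A + measure_pmf.prob M B"
    by (rule measure_Un_le) auto
  finally show ?thesis by simp
qed

lemma Zmin_eq_Min:
  assumes "1 \<le> r"
  shows "Zmin n r Y = real (Min (Y ` {1..r})) / real n"
proof -
  have "mono (\<lambda>m. real m / real n)"
    by (intro monoI divide_right_mono) auto
  then show ?thesis
    using assms unfolding Zmin_def by (subst mono_Min_commute) (auto simp: image_image)
qed

lemma powr_Delta_min_ge:
  assumes "0 < n" "0 < p" "p < 1" "0 < \<delta>"
  shows "2 / \<delta> * (real n + 1) \<le> 2 powr Delta \<delta> p n * min 1 ((1 - p) / (real n * p))"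
proof -
  define M where "M = max (p / (1 - p)) 1"
  have powr_Delta: "2 powr Delta \<delta> p n = 2 / \<delta> * (real n + 1) ^ 4 * M"
  proof -
    have "2 powr max (log 2 (p / (1 - p))) 0 = M"
      using assms(2,3) by (auto simp: M_def max_def)
    moreover have "2 powr (4 * log 2 (real n + 1)) = (real n + 1) ^ 4"
      by (simp add: powr_powr[of 2, symmetric] mult.commute[of 4] powr_numeral)
    ultimately show ?thesis
      using assms(4) by (simp add: Delta_def powr_add)
  qed
  have M_min: "1 / real n \<le> M * min 1 ((1 - p) / (real n * p))"
  proof (cases "1 \<le> p / (1 - p)")
    case True
    moreover have "1 / real n \<le> 1"
      using assms(1) by simp
    ultimately have "1 / real n \<le> p / (1 - p)"
      by linarith
    moreover have "p / (1 - p) * ((1 - p) / (real n * p)) = 1 / real n"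
      using assms(2,3) by simp
    ultimately show ?thesis
      using True assms(2,3) by (simp add: M_def min_mult_distrib_left)
  next
    case False
    then have "1 \<le> (1 - p) / p"
      using assms(2,3) by (simp add: field_simps)
    then have "1 / real n \<le> ((1 - p) / p) / real n"
      by (intro divide_right_mono) auto
    moreover have "1 / real n \<le> 1"
      using assms(1) by simp
    ultimately show ?thesis
      using False by (simp add: M_def mult.commute)
  qed
  have "real n \<le> (real n + 1) ^ 3"
    by (rule order_trans[of _ "real n + 1"]) (simp_all add: self_le_power)
  then have "1 \<le> (real n + 1) ^ 3 / real n"
    using assms(1) by simp
  then have "real n + 1 \<le> (real n + 1) * ((real n + 1) ^ 3 / real n)"
    by (metis mult_left_mono mult.right_neutral of_nat_0_le_iff add_nonneg_nonneg zero_le_one)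
  also have "\<dots> = (real n + 1) ^ 4 * (1 / real n)"
    by (simp add: eval_nat_numeral)
  also have "\<dots> \<le> (real n + 1) ^ 4 * (M * min 1 ((1 - p) / (real n * p)))"
    using M_min by (intro mult_left_mono) auto
  finally have "2 / \<delta> * (real n + 1)
      \<le> 2 / \<delta> * ((real n + 1) ^ 4 * (M * min 1 ((1 - p) / (real n * p))))"
    using assms(4) by (intro mult_left_mono) auto
  then show ?thesis
    unfolding powr_Delta by (simp only: ac_simps)
qed

lemma powr_Delta_ge:
  assumes "0 < n" "0 < p" "p < 1" "0 < \<delta>"
  shows "2 / \<delta> * (real n + 1) \<le> 2 powr Delta \<delta> p n"
  using powr_Delta_min_ge[OF assms] by (smt (verit) min.cobounded1 mult_left_le powr_ge_zero)

lemma prob_Ys_all_gt_le: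
  "measure_pmf.prob (Ys n p r) {Y. \<forall>i\<in>{1..r}. k < Y i}
     \<le> exp (- (real r * pmf (binomial_pmf n p) k))"
proof -
  have "measure_pmf.prob (Ys n p r) {Y. \<forall>i\<in>{1..r}. k < Y i}
          \<le> measure_pmf.prob (Ys n p r) {Y. \<forall>i\<in>{1..r}. Y i \<noteq> k}"
    by (intro measure_pmf.finite_measure_mono) auto
  also have "\<dots> \<le> exp (- (real r * pmf (binomial_pmf n p) k))"
    using prob_Pi_pmf_all_avoid_le[of "{1..r}" 0 "binomial_pmf n p" k] by (simp add: Ys_def)
  finally show ?thesis .
qed

lemma prob_Ys_ex_KL_gt_le:
  assumes "0 < n" "0 < p" "p < 1"
  shows "measure_pmf.prob (Ys n p r) {Y. \<exists>i\<in>{1..r}. U < KL (real (Y i) / real n) p}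
           \<le> real r * ((real n + 1) * 2 powr (- real n * U))"
proof -
  have "measure_pmf.prob (Ys n p r) {Y. \<exists>i\<in>{1..r}. U < KL (real (Y i) / real n) p}
          \<le> real r * measure_pmf.prob (binomial_pmf n p) {k. U < KL (real k / real n) p}"
    using prob_Pi_pmf_ex_in_le[of "{1..r}" 0 "binomial_pmf n p" "{k. U < KL (real k / real n) p}"]
    by (simp add: Ys_def)
  also have "\<dots> \<le> real r * ((real n + 1) * 2 powr (- real n * U))"
    using prob_binomial_KL_gt[OF assms] by (intro mult_left_mono) auto
  finally show ?thesis .
qed

lemma prob_Zmin_eq_0_ge:
  assumes "1 \<le> n" "1 \<le> r" "0 < p" "p < 1" "0 < \<delta>"
    and "KL 0 p < (log 2 (real r) - Delta \<delta> p n) / real n"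
  shows "1 - \<delta> \<le> measure_pmf.prob (Ys n p r) {Y. Zmin n r Y = 0}"
proof -
  let ?S = "{Y. \<forall>i\<in>{1..r}. 0 < Y i}"
  have "Delta \<delta> p n < log 2 (real r) - real n * KL 0 p"
    using assms(1,6) by (simp add: field_simps)
  then have "2 powr Delta \<delta> p n < 2 powr (log 2 (real r) - real n * KL 0 p)"
    by simp
  also have "\<dots> = real r * 2 powr (- real n * KL 0 p)"
    using assms(2) by (simp add: powr_diff powr_minus divide_inverse)
  also have "2 powr (- real n * KL 0 p) = pmf (binomial_pmf n p) 0"
    using assms(1,3,4) pmf_binomial_eq_KL[of n 0 p] by simp
  finally have "2 powr Delta \<delta> p n < real r * pmf (binomial_pmf n p) 0" .
  moreover have "2 / \<delta> \<le> 2 / \<delta> * (real n + 1)"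
    using assms(5) by (simp add: field_simps)
  ultimately have "1 / (\<delta> / 2) \<le> real r * pmf (binomial_pmf n p) 0"
    using powr_Delta_ge[of n p \<delta>] assms(1,3-5) by simp
  then have "exp (- (real r * pmf (binomial_pmf n p) 0)) \<le> \<delta> / 2"
    using assms(5) by (intro exp_neg_le) auto
  then have "measure_pmf.prob (Ys n p r) ?S \<le> \<delta> / 2"
    using prob_Ys_all_gt_le[of n p r 0] by linarith
  moreover have "Min (Y ` {1..r}) = 0 \<longleftrightarrow> (\<exists>i\<in>{1..r}. Y i = 0)" for Y :: "nat \<Rightarrow> nat"
    using Min_le_iff[of "Y ` {1..r}" 0] assms(2) by auto
  then have "{Y. Zmin n r Y = 0} = - ?S"
    using assms(1,2) by (auto simp: Zmin_eq_Min)
  ultimately show ?thesis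
    using measure_pmf.prob_compl[of ?S "Ys n p r"] assms(5) by (simp add: Compl_eq_Diff_UNIV)
qed

lemma prob_Ys_all_gt_KL_crossing_le:
  fixes n r :: nat and p \<delta> :: real
  defines "L \<equiv> (log 2 (real r) - Delta \<delta> p n) / real n"
  assumes "1 \<le> n" "1 \<le> r" "0 < p" "p < 1" "0 < \<delta>" "Delta \<delta> p n < log 2 (real r)"
    and "real k < real n * p"
    and "real (Suc k) < real n * p \<Longrightarrow> KL (real (Suc k) / real n) p < L"
  shows "measure_pmf.prob (Ys n p r) {Y. \<forall>i\<in>{1..r}. k < Y i} \<le> \<delta> / 2"
proof -
  have n: "0 < n" and "0 < real r"
    using assms(2,3) by auto
  have "- real n * L = Delta \<delta> p n - log 2 (real r)"
    using n by (simp add: L_def field_simps)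
  then have rL: "real r * 2 powr (- real n * L) = 2 powr Delta \<delta> p n"
    using \<open>0 < real r\<close> by (simp add: powr_diff)
  let ?c = "min 1 ((1 - p) / (real n * p))"
  have "0 \<le> L"
    using assms(7) n by (simp add: L_def)
  then have "?c * (2 powr (- real n * L) / (real n + 1)) \<le> pmf (binomial_pmf n p) k"
    using n assms(4,5,8,9) by (intro pmf_binomial_ge_at_KL_crossing)
  then have "real r * (?c * (2 powr (- real n * L) / (real n + 1)))
             \<le> real r * pmf (binomial_pmf n p) k"
    by (rule mult_left_mono) simp
  then have "2 powr Delta \<delta> p n * ?c \<le> real r * pmf (binomial_pmf n p) k * (real n + 1)"
    unfolding rL[symmetric] by (simp add: ac_simps pos_divide_le_eq)
  then have "2 / \<delta> * (real n + 1) \<le> real r * pmf (binomial_pmf n p) k * (real n + 1)"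
    using powr_Delta_min_ge[OF n assms(4-6)] by linarith
  then have "1 / (\<delta> / 2) \<le> real r * pmf (binomial_pmf n p) k"
    by (subst (asm) mult_le_cancel_right_pos) auto
  then have "exp (- (real r * pmf (binomial_pmf n p) k)) \<le> \<delta> / 2"
    using assms(6) by (intro exp_neg_le) auto
  then show ?thesis
    using prob_Ys_all_gt_le[of n p r k] by linarith
qed

lemma prob_Ys_ex_KL_gt_Delta_le:
  fixes n r :: nat and p \<delta> :: real
  defines "U \<equiv> (log 2 (real r) + Delta \<delta> p n) / real n"
  assumes "1 \<le> n" "1 \<le> r" "0 < p" "p < 1" "0 < \<delta>"
  shows "measure_pmf.prob (Ys n p r) {Y. \<exists>i\<in>{1..r}. U < KL (real (Y i) / real n) p} \<le> \<delta> / 2"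
proof -
  have n: "0 < n" and "0 < real r"
    using assms(2,3) by auto
  have "- real n * U = - (log 2 (real r) + Delta \<delta> p n)"
    using n by (simp add: U_def field_simps)
  then have "2 powr (- real n * U) = 1 / (2 powr log 2 (real r) * 2 powr Delta \<delta> p n)"
    by (simp only: powr_minus_divide powr_add)
  then have rU: "real r * 2 powr (- real n * U) = 1 / 2 powr Delta \<delta> p n"
    using \<open>0 < real r\<close> by simp
  have "measure_pmf.prob (Ys n p r) {Y. \<exists>i\<in>{1..r}. U < KL (real (Y i) / real n) p}
          \<le> real r * ((real n + 1) * 2 powr (- real n * U))"
    by (rule prob_Ys_ex_KL_gt_le[OF n assms(4,5)])
  also have "\<dots> = (real n + 1) * (real r * 2 powr (- real n * U))"
    by (rule mult.left_commute)
  also have "\<dots> = (real n + 1) / 2 powr Delta \<delta> p n"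
    unfolding rU by simp
  also have "\<dots> \<le> \<delta> / 2"
    using powr_Delta_ge[OF n assms(4-6)] assms(6) by (simp add: field_simps)
  finally show ?thesis .
qed

lemma Zmin_in_KL_window:
  assumes "1 \<le> r" "\<forall>j\<le>k. real j / real n < p \<and> L \<le> KL (real j / real n) p"
    and "\<exists>i\<in>{1..r}. Y i \<le> k" "\<forall>i\<in>{1..r}. KL (real (Y i) / real n) p \<le> U"
  shows "Zmin n r Y < p \<and> L \<le> KL (Zmin n r Y) p \<and> KL (Zmin n r Y) p \<le> U"
proof -
  have "Min (Y ` {1..r}) \<in> Y ` {1..r}"
    using assms(1) by (intro Min_in) auto
  then obtain j where j: "j \<in> {1..r}" "Y j = Min (Y ` {1..r})"
    by (metis imageE)
  have "Y j \<le> k"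
    using assms(3) j(2) Min_le_iff[of "Y ` {1..r}" k] by auto
  moreover have "Zmin n r Y = real (Y j) / real n"
    using assms(1) j(2) by (simp add: Zmin_eq_Min)
  ultimately show ?thesis
    using assms(2,4) j(1) by simp
qed

lemma prob_KL_Zmin_window_ge:
  fixes n r :: nat and p \<delta> :: real
  defines "L \<equiv> (log 2 (real r) - Delta \<delta> p n) / real n"
    and "U \<equiv> (log 2 (real r) + Delta \<delta> p n) / real n"
  assumes "1 \<le> n" "1 \<le> r" "0 < p" "p < 1" "0 < \<delta>"
    and "Delta \<delta> p n < log 2 (real r)" and "L \<le> KL 0 p"
  shows "1 - \<delta> \<le> measure_pmf.prob (Ys n p r)
                    {Y. Zmin n r Y < p \<and> L \<le> KL (Zmin n r Y) p \<and> KL (Zmin n r Y) p \<le> U}"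
proof -
  define good where "good j \<longleftrightarrow> real j / real n < p \<and> L \<le> KL (real j / real n) p" for j :: nat
  have "\<not> good n" "good 0"
    using assms(3,5,6,9) by (auto simp: good_def)
  then obtain k where good_k: "\<forall>j\<le>k. good j" and bad_Suc_k: "\<not> good (Suc k)"
    using ex_least_nat_less[of "\<lambda>j. \<not> good j" n] by blast
  have "real k < real n * p"
    using good_k assms(3) by (auto simp: good_def field_simps)
  moreover have "real (Suc k) < real n * p \<Longrightarrow> KL (real (Suc k) / real n) p < L"
    using bad_Suc_k assms(3) by (auto simp: good_def field_simps)
  ultimately have "measure_pmf.prob (Ys n p r) {Y. \<forall>i\<in>{1..r}. k < Y i} \<le> \<delta> / 2"
    using prob_Ys_all_gt_KL_crossing_le[OF assms(3-8)] unfolding L_def by blast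
  moreover have "measure_pmf.prob (Ys n p r) {Y. \<exists>i\<in>{1..r}. U < KL (real (Y i) / real n) p}
      \<le> \<delta> / 2"
    using assms(3-7) unfolding U_def by (rule prob_Ys_ex_KL_gt_Delta_le)
  moreover have "- {Y. Zmin n r Y < p \<and> L \<le> KL (Zmin n r Y) p \<and> KL (Zmin n r Y) p \<le> U}
          \<subseteq> {Y. \<forall>i\<in>{1..r}. k < Y i} \<union> {Y. \<exists>i\<in>{1..r}. U < KL (real (Y i) / real n) p}"
  proof (rule subsetI, rule ccontr)
    fix Y
    assume out: "Y \<in> - {Y. Zmin n r Y < p \<and> L \<le> KL (Zmin n r Y) p \<and> KL (Zmin n r Y) p \<le> U}"
      and "Y \<notin> {Y. \<forall>i\<in>{1..r}. k < Y i} \<union> {Y. \<exists>i\<in>{1..r}. U < KL (real (Y i) / real n) p}"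
    then have "\<exists>i\<in>{1..r}. Y i \<le> k" "\<forall>i\<in>{1..r}. KL (real (Y i) / real n) p \<le> U"
      by (auto simp: not_less)
    moreover have "\<forall>j\<le>k. real j / real n < p \<and> L \<le> KL (real j / real n) p"
      using good_k by (simp add: good_def)
    ultimately show False
      using out Zmin_in_KL_window[OF assms(4)] by blast
  qed
  then have "1 - measure_pmf.prob (Ys n p r) {Y. \<forall>i\<in>{1..r}. k < Y i}
      - measure_pmf.prob (Ys n p r) {Y. \<exists>i\<in>{1..r}. U < KL (real (Y i) / real n) p}
      \<le> measure_pmf.prob (Ys n p r)
          {Y. Zmin n r Y < p \<and> L \<le> KL (Zmin n r Y) p \<and> KL (Zmin n r Y) p \<le> U}"
    by (rule prob_ge_one_minus_union)
  ultimately show ?thesis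
    by linarith
qed

theorem theorem1:
  fixes n r :: nat and p \<delta> :: real
  assumes "n \<ge> 1" and "r \<ge> 1" and "0 < p" and "p < 1"
    and "0 < \<delta>" and "\<delta> < 1"
    and "Delta \<delta> p n < log 2 (real r)"
  shows "(KL 0 p \<ge> (log 2 (real r) - Delta \<delta> p n) / real n \<longrightarrow>
           measure_pmf.prob (Ys n p r)
             {Y. Zmin n r Y < p
                 \<and> (log 2 (real r) - Delta \<delta> p n) / real n \<le> KL (Zmin n r Y) p
                 \<and> KL (Zmin n r Y) p \<le> (log 2 (real r) + Delta \<delta> p n) / real n}
             \<ge> 1 - \<delta>)
       \<and> (KL 0 p < (log 2 (real r) - Delta \<delta> p n) / real n \<longrightarrow>
           measure_pmf.prob (Ys n p r) {Y. Zmin n r Y = 0} \<ge> 1 - \<delta>)"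
  using prob_KL_Zmin_window_ge[OF assms(1-5,7)] prob_Zmin_eq_0_ge[OF assms(1-5)] by blast

end
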